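(* Let $k\geq 1$ be an integer and $\lambda>0$ a real number. Let $f_k(x;\lambda)$ denote the probability mass function of the Poisson distribution of order $k$ with parameter $\lambda$. Then every mode $m_{k,\lambda}$ of $f_k(\cdot;\lambda)$ (i.e., every nonnegative integer $x$ at which $f_k(x;\lambda)$ attains its maximum over $x\in\{0,1,2,\dots\}$) satisfies \[ \left\lfloor \frac{\lambda k(k+1)}{2}\right\rfloor - \frac{k(k+1)}{2} + 1 - \delta_{k,1} \;\leq\; m_{k,\lambda} \;\leq\; \left\lfloor \frac{\lambda k(k+1)}{2}\right\rfloor, \] where $\delta_{k,1}$ is the Kronecker delta ($\delta_{k,1}=1$ if $k=1$ and $0$ otherwise).
   Context: For a positive integer $k$ and real $\lambda>0$, the Poisson distribution of order $k$ with parameter $\lambda$ is the distribution on $\{0,1,2,\dots\}$ with probability mass function \[ f_k(x;\lambda)=\sum e^{-k\lambda}\frac{\lambda^{x_1+x_2+\cdots+x_k}}{x_1!\,x_2!\cdots x_k!},\qquad x=0,1,2,\dots, \] where the sum is over all $k$-tuples $(x_1,\dots,x_k)$ of nonnegative integers with $x_1+2x_2+\cdots+kx_k=x$. Equivalently, its probability generating function is $\sum_{x\ge0}f_k(x;\lambda)s^x=e^{\lambda(-k+s+s^2+\cdots+s^k)}$. For $k=1$ it is the ordinary Poisson distribution. $\lfloor u\rfloor$ denotes the greatest integer not exceeding $u$. *)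

theory Defs
  imports "HOL-Analysis.Analysis"
begin

text \<open>k-tuples (x_1,...,x_k) of nonnegative integers are represented as functions
  nat => nat that vanish outside {1..k}.\<close>
definition order_k_tuples :: "nat \<Rightarrow> nat \<Rightarrow> (nat \<Rightarrow> nat) set" where
  "order_k_tuples k x =
     {xs. (\<forall>i. i \<notin> {1..k} \<longrightarrow> xs i = 0) \<and> (\<Sum>i=1..k. i * xs i) = x}"

definition poisson_k_pmf :: "nat \<Rightarrow> real \<Rightarrow> nat \<Rightarrow> real" where
  "poisson_k_pmf k lam x =
     (\<Sum>xs\<in>order_k_tuples k x.
        exp (- real k * lam) * lam ^ (\<Sum>i=1..k. xs i) / (\<Prod>i=1..k. fact (xs i)))"

definition is_mode_poisson_k :: "nat \<Rightarrow> real \<Rightarrow> nat \<Rightarrow> bool" where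
  "is_mode_poisson_k k lam m \<longleftrightarrow> (\<forall>y. poisson_k_pmf k lam y \<le> poisson_k_pmf k lam m)"

end

theory Submission
  imports Defs
begin

text \<open>Write the pmf as \<open>exp(-k\<lambda>) h(x)\<close>. Splitting \<open>x = \<Sum>\<^sub>i i x\<^sub>i\<close> inside the sum over
  tuples gives the recurrence \<open>x h(x) = \<lambda> \<Sum>\<^sub>j j h(x - j)\<close> (\<open>1 \<le> j \<le> k\<close>, \<open>h\<close> vanishing at negative
  arguments). At a mode \<open>m\<close>, bounding every \<open>h(m - j)\<close> by \<open>h(m)\<close> gives \<open>m \<le> \<lambda>k(k+1)/2\<close>.
  Conversely, differencing the recurrence shows by strong induction that \<open>h\<close> increases strictly
  at every \<open>x < (\<lambda> - 1)k(k+1)/2\<close>, and for \<open>k \<ge> 2\<close> also at equality, so no mode lies below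
  that point; taking floors turns the two real bounds into the stated integer ones.\<close>

lemma order_k_tuples_weighted_component_le:
  assumes "xs \<in> order_k_tuples k x"
  shows "j * xs j \<le> x"
proof (cases "j \<in> {1..k}")
  case True
  then have "j * xs j \<le> (\<Sum>i=1..k. i * xs i)"
    by (intro member_le_sum) auto
  with assms show ?thesis
    by (simp add: order_k_tuples_def)
next
  case False
  with assms show ?thesis
    by (simp add: order_k_tuples_def)
qed

lemma order_k_tuples_component_le:
  assumes "xs \<in> order_k_tuples k x"
  shows "xs j \<le> x"
proof (cases j)
  case 0
  with assms show ?thesis
    by (simp add: order_k_tuples_def)
next
  case (Suc i)
  with order_k_tuples_weighted_component_le[OF assms, of j] show ?thesis
    by simp
qed

lemma order_k_tuples_component_eq_0:
  assumes "xs \<in> order_k_tuples k x" and "x < j"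
  shows "xs j = 0"
proof (rule ccontr)
  assume "xs j \<noteq> 0"
  then have "j \<le> j * xs j"
    by simp
  with order_k_tuples_weighted_component_le[OF assms(1), of j] assms(2) show False
    by linarith
qed

lemma finite_order_k_tuples: "finite (order_k_tuples k x)"
proof (rule finite_subset)
  show "order_k_tuples k x \<subseteq> {f. \<forall>j. (j \<in> {1..k} \<longrightarrow> f j \<in> {0..x}) \<and> (j \<notin> {1..k} \<longrightarrow> f j = 0)}"
    using order_k_tuples_component_le by (auto simp: order_k_tuples_def)
  show "finite {f. \<forall>j. (j \<in> {1..k} \<longrightarrow> f j \<in> {0..x}) \<and> (j \<notin> {1..k} \<longrightarrow> f j = (0::nat))}"
    by (rule finite_set_of_finite_funs) auto
qed

definition tuple_weight :: "nat \<Rightarrow> real \<Rightarrow> (nat \<Rightarrow> nat) \<Rightarrow> real" where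
  "tuple_weight k lam xs = lam ^ (\<Sum>i=1..k. xs i) / (\<Prod>i=1..k. fact (xs i))"

definition poisson_k_weight :: "nat \<Rightarrow> real \<Rightarrow> nat \<Rightarrow> real" where
  "poisson_k_weight k lam x = (\<Sum>xs\<in>order_k_tuples k x. tuple_weight k lam xs)"

lemma poisson_k_pmf_eq_weight:
  "poisson_k_pmf k lam x = exp (- real k * lam) * poisson_k_weight k lam x"
  unfolding poisson_k_pmf_def poisson_k_weight_def tuple_weight_def
  by (simp add: sum_distrib_left)

lemma tuple_weight_pos: "lam > 0 \<Longrightarrow> tuple_weight k lam xs > 0"
  unfolding tuple_weight_def by (intro divide_pos_pos prod_pos) auto

lemma poisson_k_weight_pos:
  assumes "k \<ge> 1" and "lam > 0"
  shows "poisson_k_weight k lam x > 0"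
proof -
  let ?xs = "\<lambda>j. if j = 1 then x else 0"
  have "(\<Sum>i=1..k. i * ?xs i) = (\<Sum>i=1..k. if i = 1 then x else 0)"
    by (rule sum.cong) auto
  with assms(1) have "?xs \<in> order_k_tuples k x"
    by (simp add: order_k_tuples_def)
  with assms(2) show ?thesis
    unfolding poisson_k_weight_def
    by (intro sum_pos2[OF finite_order_k_tuples]) (auto intro: tuple_weight_pos less_imp_le)
qed

lemma order_k_tuples_bump_bij:
  assumes i: "i \<in> {1..k}" and "i \<le> x"
  shows "bij_betw (\<lambda>ys j. ys j + of_bool (j = i))
           (order_k_tuples k (x - i)) {xs \<in> order_k_tuples k x. xs i \<noteq> 0}"
proof (rule bij_betw_byWitness[where f' = "\<lambda>xs j. xs j - of_bool (j = i)"])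
  have weighted_bump: "(\<Sum>j=1..k. j * (ys j + of_bool (j = i))) = (\<Sum>j=1..k. j * ys j) + i"
    for ys :: "nat \<Rightarrow> nat"
    using i by (simp add: sum.distrib distrib_left)
  show "(\<lambda>ys j. ys j + of_bool (j = i)) ` order_k_tuples k (x - i)
          \<subseteq> {xs \<in> order_k_tuples k x. xs i \<noteq> 0}"
    using i \<open>i \<le> x\<close> weighted_bump by (fastforce simp: order_k_tuples_def)
  show "(\<lambda>xs j. xs j - of_bool (j = i)) ` {xs \<in> order_k_tuples k x. xs i \<noteq> 0}
          \<subseteq> order_k_tuples k (x - i)"
  proof clarify
    fix xs assume xs: "xs \<in> order_k_tuples k x" "0 < xs i"
    then have "(\<Sum>j=1..k. j * (xs j - of_bool (j = i) + of_bool (j = i))) = (\<Sum>j=1..k. j * xs j)"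
      by (intro sum.cong) auto
    with weighted_bump[of "\<lambda>j. xs j - of_bool (j = i)"] xs(1)
    have "(\<Sum>j=1..k. j * (xs j - of_bool (j = i))) + i = x"
      by (simp add: order_k_tuples_def)
    with xs(1) show "(\<lambda>j. xs j - of_bool (j = i)) \<in> order_k_tuples k (x - i)"
      by (auto simp: order_k_tuples_def)
  qed
qed auto

lemma tuple_weight_bump:
  assumes "i \<in> {1..k}"
  shows "real (Suc (ys i)) * tuple_weight k lam (\<lambda>j. ys j + of_bool (j = i))
           = lam * tuple_weight k lam ys"
proof -
  have "(\<Prod>j=1..k. fact (ys j + of_bool (j = i)) :: real)
          = (\<Prod>j=1..k. fact (ys j) * (if j = i then real (Suc (ys j)) else 1))"
    by (rule prod.cong) auto
  also have "\<dots> = (\<Prod>j=1..k. fact (ys j)) * real (Suc (ys i))"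
    using assms by (simp add: prod.distrib)
  finally have "(\<Prod>j=1..k. fact (ys j + of_bool (j = i)) :: real)
                  = (\<Prod>j=1..k. fact (ys j)) * real (Suc (ys i))" .
  moreover have "(\<Sum>j=1..k. ys j + of_bool (j = i)) = Suc (\<Sum>j=1..k. ys j)"
    using assms by (simp add: sum.distrib)
  moreover have "(\<Prod>j=1..k. fact (ys j) :: real) > 0"
    by (intro prod_pos) auto
  ultimately show ?thesis
    unfolding tuple_weight_def by (simp add: field_simps del: of_nat_Suc)
qed

lemma sum_component_tuple_weight:
  assumes i: "i \<in> {1..k}" and "i \<le> x"
  shows "(\<Sum>xs\<in>order_k_tuples k x. real (xs i) * tuple_weight k lam xs)
           = lam * poisson_k_weight k lam (x - i)"
proof -
  have "(\<Sum>xs\<in>order_k_tuples k x. real (xs i) * tuple_weight k lam xs)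
          = (\<Sum>xs\<in>{xs \<in> order_k_tuples k x. xs i \<noteq> 0}. real (xs i) * tuple_weight k lam xs)"
    by (rule sum.mono_neutral_right) (auto simp: finite_order_k_tuples)
  also have "\<dots> = (\<Sum>ys\<in>order_k_tuples k (x - i).
                     real (Suc (ys i)) * tuple_weight k lam (\<lambda>j. ys j + of_bool (j = i)))"
    by (subst sum.reindex_bij_betw[OF order_k_tuples_bump_bij[OF assms], symmetric]) simp
  also have "\<dots> = lam * poisson_k_weight k lam (x - i)"
    using tuple_weight_bump[OF i]
    by (simp add: poisson_k_weight_def sum_distrib_left del: of_nat_Suc)
  finally show ?thesis .
qed

definition zero_extension :: "(nat \<Rightarrow> real) \<Rightarrow> int \<Rightarrow> real" where
  "zero_extension h y = (if y < 0 then 0 else h (nat y))"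

lemma zero_extension_of_nat [simp]: "zero_extension h (int x) = h x"
  by (simp add: zero_extension_def)

lemma poisson_k_weight_recurrence:
  "real x * poisson_k_weight k lam x
     = lam * (\<Sum>j=1..k. real j * zero_extension (poisson_k_weight k lam) (int x - int j))"
proof -
  have weighted_size: "real x * tuple_weight k lam xs
                         = (\<Sum>j=1..k. real j * (real (xs j) * tuple_weight k lam xs))"
    if "xs \<in> order_k_tuples k x" for xs
  proof -
    from that have "x = (\<Sum>j=1..k. j * xs j)"
      by (simp add: order_k_tuples_def)
    then have "real x = (\<Sum>j=1..k. real j * real (xs j))"
      by (simp only: of_nat_sum of_nat_mult)
    then show ?thesis
      by (simp only: sum_distrib_right mult.assoc)
  qed
  have component_sum: "real j * (\<Sum>xs\<in>order_k_tuples k x. real (xs j) * tuple_weight k lam xs)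
          = lam * (real j * zero_extension (poisson_k_weight k lam) (int x - int j))"
    if j: "j \<in> {1..k}" for j
  proof (cases "j \<le> x")
    case True
    then have "zero_extension (poisson_k_weight k lam) (int x - int j) = poisson_k_weight k lam (x - j)"
      by (simp add: zero_extension_def nat_diff_distrib)
    with True show ?thesis
      by (simp add: sum_component_tuple_weight[OF j] mult.left_commute)
  next
    case False
    then show ?thesis
      by (simp add: order_k_tuples_component_eq_0 zero_extension_def)
  qed
  have "real x * poisson_k_weight k lam x
          = (\<Sum>xs\<in>order_k_tuples k x. \<Sum>j=1..k. real j * (real (xs j) * tuple_weight k lam xs))"
    unfolding poisson_k_weight_def sum_distrib_left using weighted_size by (rule sum.cong[OF refl])
  also have "\<dots> = (\<Sum>j=1..k. real j * (\<Sum>xs\<in>order_k_tuples k x. real (xs j) * tuple_weight k lam xs))"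
    by (subst sum.swap) (simp only: sum_distrib_left)
  also have "\<dots> = (\<Sum>j=1..k. lam * (real j * zero_extension (poisson_k_weight k lam) (int x - int j)))"
    using component_sum by (rule sum.cong[OF refl])
  also have "\<dots> = lam * (\<Sum>j=1..k. real j * zero_extension (poisson_k_weight k lam) (int x - int j))"
    by (simp only: sum_distrib_left)
  finally show ?thesis .
qed

lemma sum_weighted_differences:
  fixes F :: "int \<Rightarrow> real"
  shows "(\<Sum>j=1..Suc n. real j * (F (1 + x - int j) - F (x - int j)))
           = F x + (\<Sum>j=1..n. F (x - int j)) - real (Suc n) * F (x - int (Suc n))"
proof (induction n)
  case (Suc n)
  have "1 + x - int (Suc (Suc n)) = x - int (Suc n)"
    by simp
  with Suc show ?case
    by (simp add: algebra_simps)
qed simp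

lemma strict_mono_on_atMostI:
  fixes f :: "nat \<Rightarrow> 'a::order"
  assumes "\<And>i. i < n \<Longrightarrow> f i < f (Suc i)"
  shows "strict_mono_on {..n} f"
proof (rule strict_mono_onI)
  fix a b assume "a \<in> {..n}" "b \<in> {..n}" "a < b"
  then show "f a < f b"
  proof (induction b)
    case (Suc b)
    have "f a \<le> f b"
      using Suc by (cases "a = b") (auto simp: less_imp_le)
    moreover have "f b < f (Suc b)"
      using assms Suc.prems by simp
    ultimately show ?case
      by (rule order.strict_trans1)
  qed simp
qed

locale order_k_recurrence =
  fixes k :: nat and lam :: real and h :: "nat \<Rightarrow> real"
  assumes k_ge_1: "k \<ge> 1"
    and lam_pos: "lam > 0"
    and pos: "\<And>x. h x > 0"
    and recurrence: "\<And>x. real x * h x = lam * (\<Sum>j=1..k. real j * zero_extension h (int x - int j))"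
begin

definition triangular :: real where
  "triangular = (\<Sum>j=1..k. real j)"

lemma triangular_eq: "triangular = real (k * (k + 1) div 2)"
proof -
  have "triangular = real (\<Sum>j=1..k. j)"
    by (simp add: triangular_def)
  also have "(\<Sum>j=1..k. j) = k * (k + 1) div 2"
    using gauss_sum_from_Suc_0[of k, where ?'a = nat] by simp
  finally show ?thesis .
qed

lemma double_triangular: "2 * triangular = real (k * (k + 1))"
  using double_gauss_sum_from_Suc_0[of k, where ?'a = real]
  by (simp add: triangular_def algebra_simps)

lemma triangular_pos: "triangular > 0"
  using k_ge_1 unfolding triangular_def by (intro sum_pos) auto

lemma zero_extension_nonneg: "zero_extension h y \<ge> 0"
  using pos by (simp add: zero_extension_def less_imp_le)

lemma zero_extension_strict_mono:
  assumes mono: "strict_mono_on {..n} h" and "y < z" "0 \<le> z" "z \<le> int n"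
  shows "zero_extension h y < zero_extension h z"
proof (cases "y < 0")
  case True
  with assms pos show ?thesis
    by (simp add: zero_extension_def)
next
  case False
  with assms have "h (nat y) < h (nat z)"
    by (intro strict_mono_onD[OF mono]) auto
  with False assms show ?thesis
    by (simp add: zero_extension_def)
qed

lemma zero_extension_mono:
  assumes "strict_mono_on {..n} h" and "y \<le> z" "z \<le> int n"
  shows "zero_extension h y \<le> zero_extension h z"
proof (cases "z < 0")
  case True
  with assms show ?thesis
    by (simp add: zero_extension_def)
next
  case False
  with assms zero_extension_strict_mono[of n y z] show ?thesis
    by (cases "y = z") auto
qed

lemma recurrence_below_order:
  assumes "x \<le> k"
  shows "real x * h x = lam * (\<Sum>j=1..x. real j * h (x - j))"
proof -
  have "(\<Sum>j=1..k. real j * zero_extension h (int x - int j))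
          = (\<Sum>j=1..x. real j * zero_extension h (int x - int j))"
    using assms by (intro sum.mono_neutral_right) (auto simp: zero_extension_def)
  also have "\<dots> = (\<Sum>j=1..x. real j * h (x - j))"
    by (intro sum.cong refl) (simp add: zero_extension_def nat_diff_distrib)
  finally show ?thesis
    using recurrence[of x] by simp
qed

lemma recurrence_difference:
  "real (Suc n) * h (Suc n) - real n * h n
     = lam * (h n + (\<Sum>j=1..k-1. zero_extension h (int n - int j))
              - real k * zero_extension h (int n - int k))"
proof -
  obtain k' where k': "k = Suc k'"
    using k_ge_1 by (cases k) auto
  have "real (Suc n) * h (Suc n) - real n * h n
          = lam * (\<Sum>j=1..k. real j * zero_extension h (int (Suc n) - int j))
            - lam * (\<Sum>j=1..k. real j * zero_extension h (int n - int j))"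
    by (simp only: recurrence)
  also have "\<dots> = lam * (\<Sum>j=1..k. real j * (zero_extension h (1 + int n - int j)
                                                  - zero_extension h (int n - int j)))"
    by (simp add: right_diff_distrib sum_subtractf)
  also have "\<dots> = lam * (h n + (\<Sum>j=1..k-1. zero_extension h (int n - int j))
                          - real k * zero_extension h (int n - int k))"
    unfolding k' sum_weighted_differences by simp
  finally show ?thesis .
qed

lemma mode_le:
  assumes mode: "\<And>y. h y \<le> h m"
  shows "real m \<le> lam * triangular"
proof -
  have "zero_extension h y \<le> h m" for y
    using mode pos[of m] by (simp add: zero_extension_def less_imp_le)
  then have "real m * h m \<le> lam * (\<Sum>j=1..k. real j * h m)"
    unfolding recurrence using lam_pos by (intro mult_left_mono sum_mono) auto
  also have "\<dots> = lam * triangular * h m"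
    by (simp add: triangular_def sum_distrib_right)
  finally show ?thesis
    using pos[of m] by simp
qed

lemma recurrence_centered:
  fixes n :: nat
  defines "a \<equiv> zero_extension h (int n - int k)"
    and "A \<equiv> \<lambda>j. zero_extension h (int n - int j) - zero_extension h (int n - int k)"
  shows "real n * h n = lam * ((\<Sum>j=1..k. real j * A j) + triangular * a)"
    and "real (Suc n) * h (Suc n) - real n * h n = lam * (h n + (\<Sum>j=1..k-1. A j) - a)"
proof -
  have "(\<Sum>j=1..k. real j * zero_extension h (int n - int j)) = (\<Sum>j=1..k. real j * A j + real j * a)"
    by (intro sum.cong) (auto simp: A_def a_def algebra_simps)
  then show "real n * h n = lam * ((\<Sum>j=1..k. real j * A j) + triangular * a)"
    using recurrence[of n] by (simp add: triangular_def sum.distrib sum_distrib_right)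
  have "(\<Sum>j=1..k-1. zero_extension h (int n - int j)) = (\<Sum>j=1..k-1. A j + a)"
    by (simp add: A_def a_def)
  also have "\<dots> = (\<Sum>j=1..k-1. A j) + real (k - 1) * a"
    by (simp add: sum.distrib)
  finally have "real (Suc n) * h (Suc n) - real n * h n
                  = lam * (h n + ((\<Sum>j=1..k-1. A j) + real (k - 1) * a) - real k * a)"
    using recurrence_difference[of n] by (simp only: a_def)
  then show "real (Suc n) * h (Suc n) - real n * h n = lam * (h n + (\<Sum>j=1..k-1. A j) - a)"
    using k_ge_1 by (simp add: algebra_simps)
qed

lemma increasing_step:
  assumes mono: "strict_mono_on {..n} h" and n: "n \<ge> 1"
    and below: "real n \<le> (lam - 1) * triangular"
    and strict: "k \<ge> 2 \<or> real n < (lam - 1) * triangular"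
  shows "h n < h (Suc n)"
proof -
  define F where "F = zero_extension h"
  define a where "a = F (int n - int k)"
  define A where "A j = F (int n - int j) - a" for j
  define S where "S = (\<Sum>j=1..k. real j * A j)"
  define B where "B = (\<Sum>j=1..k-1. A j)"
  have rec_n: "real n * h n = lam * (S + triangular * a)"
    and rec_diff: "real (Suc n) * h (Suc n) - real n * h n = lam * (h n + B - a)"
    using recurrence_centered[of n] by (simp_all add: S_def B_def A_def a_def F_def)
  have "0 \<le> (lam - 1) * triangular"
    using below by linarith
  then have lam_ge_1: "lam \<ge> 1"
    using triangular_pos by (simp add: zero_le_mult_iff)
  have A_nonneg: "A j \<ge> 0" if "j \<le> k" for j
    using zero_extension_mono[OF mono, of "int n - int k" "int n - int j"] that
    by (simp add: A_def a_def F_def)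
  have a_nonneg: "a \<ge> 0"
    by (simp add: a_def F_def zero_extension_nonneg)
  have S_nonneg: "S \<ge> 0" and B_nonneg: "B \<ge> 0"
    using A_nonneg by (auto simp: S_def B_def intro!: sum_nonneg)
  have positive_part: "real n * B > 0 \<or> a * ((lam - 1) * triangular - real n) > 0"
  proof (cases "k \<ge> 2")
    case True
    have "A 1 > 0"
      using zero_extension_strict_mono[OF mono, of "int n - int k" "int n - 1"] True n
      by (simp add: A_def a_def F_def)
    moreover have "A 1 \<le> B"
      unfolding B_def using True A_nonneg by (intro member_le_sum) auto
    ultimately show ?thesis
      using n by simp
  next
    case False
    with k_ge_1 n have "a > 0"
      using pos by (simp add: a_def F_def zero_extension_def)
    moreover from False strict have "real n < (lam - 1) * triangular"
      by simp
    ultimately show ?thesis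
      by simp
  qed
  \<comment> \<open>Since \<open>n h(n) = \<lambda>(S + triangular a)\<close>, the claim \<open>\<lambda>(h n + B - a) > h n\<close> reduces to this
    decomposition into nonnegative parts, one of them positive.\<close>
  have "real n * (h n + B - a) - (S + triangular * a)
          = (lam - 1) * S + real n * B + a * ((lam - 1) * triangular - real n)"
    using rec_n n by (simp add: field_simps)
  moreover have "(lam - 1) * S \<ge> 0" and "real n * B \<ge> 0"
    and "a * ((lam - 1) * triangular - real n) \<ge> 0"
    using lam_ge_1 S_nonneg B_nonneg a_nonneg below by auto
  ultimately have "real n * (h n + B - a) > S + triangular * a"
    using positive_part by linarith
  then have "real n * (lam * (h n + B - a)) > real n * h n"
    using rec_n lam_pos by (simp add: mult.left_commute)
  then have "lam * (h n + B - a) > h n"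
    using n by simp
  with rec_diff have "real (Suc n) * h n < real (Suc n) * h (Suc n)"
    by (simp add: algebra_simps)
  then show ?thesis
    by (simp only: mult_less_cancel_left_pos of_nat_0_less_iff zero_less_Suc)
qed

lemma increasing_below:
  assumes "real n < (lam - 1) * triangular \<or> (k \<ge> 2 \<and> n \<ge> 1 \<and> real n \<le> (lam - 1) * triangular)"
  shows "h n < h (Suc n)"
  using assms
proof (induction n rule: less_induct)
  case (less n)
  show ?case
  proof (cases "n = 0")
    case True
    with less.prems have "0 < (lam - 1) * triangular"
      by simp
    with triangular_pos have "lam > 1"
      by (simp add: zero_less_mult_iff)
    with True pos[of 0] show ?thesis
      using recurrence_below_order[of 1] k_ge_1 by simp
  next
    case False
    have below: "real n \<le> (lam - 1) * triangular"
      using less.prems by auto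
    have "strict_mono_on {..n} h"
      using less.IH below by (intro strict_mono_on_atMostI) auto
    from increasing_step[OF this] False below less.prems show ?thesis
      by auto
  qed
qed

lemma mode_ge:
  assumes mode: "\<And>y. h y \<le> h m"
  shows "(lam - 1) * triangular \<le> real m"
  using increasing_below[of m] mode[of "Suc m"] by linarith

lemma mode_gt:
  assumes "k \<ge> 2" and mode: "\<And>y. h y \<le> h m"
  shows "(lam - 1) * triangular < real m"
proof (rule ccontr)
  assume not_gt: "\<not> (lam - 1) * triangular < real m"
  show False
  proof (cases "m = 0")
    case True
    \<comment> \<open>For \<open>\<lambda> = 1\<close> one has \<open>h 1 = h 0\<close>, so compare \<open>h 0\<close> with \<open>h 2\<close> instead.\<close>
    with not_gt triangular_pos have "lam \<ge> 1"
      by (simp add: not_less zero_le_mult_iff)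
    have "h 1 = lam * h 0" and h_2: "2 * h 2 = lam * (h 1 + 2 * h 0)"
      using recurrence_below_order[of 1] recurrence_below_order[of 2] assms(1)
      by (simp_all add: numeral_2_eq_2)
    with \<open>lam \<ge> 1\<close> pos[of 0] have "h 1 \<ge> h 0"
      by simp
    then have "3 * h 0 \<le> h 1 + 2 * h 0"
      by simp
    also have "\<dots> \<le> lam * (h 1 + 2 * h 0)"
      using \<open>lam \<ge> 1\<close> \<open>h 1 \<ge> h 0\<close> pos[of 0] by simp
    finally have "2 * h 2 \<ge> 3 * h 0"
      unfolding h_2 .
    with True mode[of 2] pos[of 0] show False
      by simp
  next
    case False
    with assms not_gt show False
      using increasing_below[of m] mode[of "Suc m"] by auto
  qed
qed

end

theorem theorem2p1:
  fixes k :: nat and lam :: real and m :: nat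
  assumes "k \<ge> 1" and "lam > 0" and "is_mode_poisson_k k lam m"
  shows "\<lfloor>lam * real (k * (k + 1)) / 2\<rfloor> - int (k * (k + 1) div 2) + 1 - (if k = 1 then 1 else 0)
           \<le> int m
         \<and> int m \<le> \<lfloor>lam * real (k * (k + 1)) / 2\<rfloor>"
proof -
  interpret order_k_recurrence k lam "poisson_k_weight k lam"
    using assms(1,2) poisson_k_weight_pos poisson_k_weight_recurrence by unfold_locales auto
  have mode: "poisson_k_weight k lam y \<le> poisson_k_weight k lam m" for y
    using assms(3) by (simp add: is_mode_poisson_k_def poisson_k_pmf_eq_weight)
  have scaled: "lam * real (k * (k + 1)) / 2 = lam * triangular"
    using double_triangular by simp
  have "int m \<le> \<lfloor>lam * triangular\<rfloor>"
    using mode_le[OF mode] by (simp add: le_floor_iff)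
  moreover have "lam * triangular < real m + triangular + (if k = 1 then 1 else 0)"
  proof (cases "k = 1")
    case True
    with mode_ge[OF mode] show ?thesis
      by (simp add: left_diff_distrib)
  next
    case False
    with mode_gt[OF _ mode] assms(1) show ?thesis
      by (simp add: left_diff_distrib)
  qed
  then have "\<lfloor>lam * triangular\<rfloor> < int m + int (k * (k + 1) div 2) + (if k = 1 then 1 else 0)"
    unfolding triangular_eq by (cases "k = 1") (simp_all add: floor_less_iff)
  ultimately show ?thesis
    unfolding scaled by linarith
qed

end
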